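(* Consider the random pairwise load balancing process on $n\ge 2$ nodes with initial load vector $\ell(0)\in\mathbb{N}_0^n$ and initial discrepancy $\Delta=\max_i\ell_i(0)-\min_i\ell_i(0)\ge 1$. Let $T_1$ be the first time step $t$ with $\Phi(\ell(t)) < n$. Then with high probability (probability $1-O(1/n)$), $T_1 = O(n\log n + n\log\Delta)$, with an absolute constant in the $O(\cdot)$.
   Context: Random pairwise load balancing process: $n$ nodes (complete graph), $m$ indistinguishable tokens. The load vector at time $t\in\mathbb{N}_0$ is $\ell(t)=(\ell_1(t),\dots,\ell_n(t))$, $\ell_i(t)$ the number of tokens at node $i$. In each time step $t$, independently of everything before, an ordered pair $(u,v)$ of distinct nodes is chosen uniformly at random, and the loads are updated to $\ell_u(t+1)=\lceil(\ell_u(t)+\ell_v(t))/2\rceil$, $\ell_v(t+1)=\lfloor(\ell_u(t)+\ell_v(t))/2\rfloor$; other loads unchanged. The average load is $\varnothing=m/n$. The potential of a load vector $\ell$ is $\Phi(\ell)=\sum_{i=1}^n(\ell_i-\varnothing)^2$. *)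

theory Defs
  imports "HOL-Probability.Probability"
begin

text \<open>Load vectors on n nodes are functions nat => nat; only the entries at indices
  0..n-1 are meaningful (the nodes are 0,...,n-1).\<close>

definition lb_pairs :: "nat \<Rightarrow> (nat \<times> nat) set" where
  "lb_pairs n = {(u, v). u < n \<and> v < n \<and> u \<noteq> v}"

definition lb_update :: "(nat \<Rightarrow> nat) \<Rightarrow> nat \<Rightarrow> nat \<Rightarrow> (nat \<Rightarrow> nat)" where
  "lb_update l u v = l(u := (l u + l v + 1) div 2, v := (l u + l v) div 2)"

text \<open>Distribution of the trajectory (l(0), ..., l(t)) as a list of length t+1.\<close>
fun lb_traj :: "nat \<Rightarrow> (nat \<Rightarrow> nat) \<Rightarrow> nat \<Rightarrow> (nat \<Rightarrow> nat) list pmf" where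
  "lb_traj n l0 0 = return_pmf [l0]"
| "lb_traj n l0 (Suc t) =
     bind_pmf (lb_traj n l0 t)
       (\<lambda>xs. map_pmf (\<lambda>(u, v). xs @ [lb_update (last xs) u v]) (pmf_of_set (lb_pairs n)))"

definition lb_avg :: "nat \<Rightarrow> (nat \<Rightarrow> nat) \<Rightarrow> real" where
  "lb_avg n l = (\<Sum>i<n. real (l i)) / real n"

definition lb_potential :: "nat \<Rightarrow> (nat \<Rightarrow> nat) \<Rightarrow> real" where
  "lb_potential n l = (\<Sum>i<n. (real (l i) - lb_avg n l)^2)"

definition lb_discrepancy :: "nat \<Rightarrow> (nat \<Rightarrow> nat) \<Rightarrow> nat" where
  "lb_discrepancy n l = Max (l ` {..<n}) - Min (l ` {..<n})"

end

theory Submission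
  imports Defs
begin

text \<open>While \<open>\<Phi> \<ge> n\<close>, a uniformly random balancing step decreases \<open>\<Phi>\<close> in expectation by the
  factor \<open>1 - 1/(2n)\<close>: balancing \<open>(u,v)\<close> removes \<open>((\<ell>\<^sub>u - \<ell>\<^sub>v)\<^sup>2 - 1)/2\<close>, and the mean of
  \<open>(\<ell>\<^sub>u - \<ell>\<^sub>v)\<^sup>2\<close> over the at most \<open>n\<^sup>2\<close> ordered pairs is at least \<open>2\<Phi>/n\<close>. Hence the potential,
  replaced by \<open>0\<close> once it has dropped below \<open>n\<close>, has expectation at most \<open>(1 - 1/(2n))\<^sup>T \<Phi>(\<ell>(0))\<close>,
  and Markov's inequality bounds the probability that it has not dropped by time \<open>T\<close> by this
  quantity divided by \<open>n\<close>. Since \<open>\<Phi>(\<ell>(0)) \<le> n \<Delta>\<^sup>2\<close>, the choice \<open>T \<ge> 4n (ln n + ln \<Delta>)\<close> makes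
  this at most \<open>1/n\<^sup>2\<close>.\<close>

lemma sum_square_differences:
  fixes f :: "'a \<Rightarrow> real"
  shows "(\<Sum>u\<in>A. \<Sum>v\<in>A. (f u - f v)^2) = 2 * real (card A) * (\<Sum>i\<in>A. (f i)^2) - 2 * (\<Sum>i\<in>A. f i)^2"
proof -
  define Q where "Q = (\<Sum>i\<in>A. (f i)^2)"
  define S where "S = (\<Sum>i\<in>A. f i)"
  have "(\<Sum>u\<in>A. \<Sum>v\<in>A. (f u - f v)^2) = (\<Sum>u\<in>A. \<Sum>v\<in>A. (f u)^2 + (f v)^2 - 2 * f u * f v)"
    by (intro sum.cong refl) (simp add: power2_diff)
  also have "\<dots> = (\<Sum>u\<in>A. real (card A) * (f u)^2 + Q - 2 * f u * S)"
    unfolding Q_def S_def by (intro sum.cong refl) (simp add: sum.distrib sum_subtractf sum_distrib_left)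
  also have "\<dots> = real (card A) * Q + real (card A) * Q - 2 * S * S"
  proof -
    have "(\<Sum>u\<in>A. 2 * f u * S) = 2 * (\<Sum>u\<in>A. f u) * S"
      by (simp add: sum_distrib_left sum_distrib_right)
    thus ?thesis by (simp add: sum.distrib sum_subtractf Q_def S_def sum_distrib_left)
  qed
  finally show ?thesis by (simp add: Q_def S_def power2_eq_square)
qed

lemma lb_potential_eq:
  assumes "n > 0"
  shows "lb_potential n l = (\<Sum>i<n. real (l i)^2) - (\<Sum>i<n. real (l i))^2 / real n"
proof -
  define S where "S = (\<Sum>i<n. real (l i))"
  have "lb_potential n l = (\<Sum>i<n. real (l i)^2 - 2 * (S / n) * real (l i) + (S / n)^2)"
    unfolding lb_potential_def lb_avg_def S_def[symmetric]
    by (rule sum.cong) (auto simp: power2_diff)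
  also have "\<dots> = (\<Sum>i<n. real (l i)^2) - 2 * (S / n) * S + n * (S / n)^2"
    by (simp add: sum.distrib sum_subtractf sum_distrib_left S_def)
  also have "\<dots> = (\<Sum>i<n. real (l i)^2) - S^2 / n"
    using assms by (simp add: field_simps power2_eq_square)
  finally show ?thesis by (simp add: S_def)
qed

lemma lb_potential_nonneg: "lb_potential n l \<ge> 0"
  unfolding lb_potential_def by (auto intro: sum_nonneg)

lemma lb_potential_le_discrepancy:
  assumes "n > 0"
  shows "lb_potential n l \<le> real n * real (lb_discrepancy n l)^2"
proof -
  define mx where "mx = Max (l ` {..<n})"
  define mn where "mn = Min (l ` {..<n})"
  have bounds: "mn \<le> l i \<and> l i \<le> mx" if "i < n" for i
    using that by (auto simp: mx_def mn_def)
  have "mn \<le> mx" using bounds[of 0] assms by auto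
  hence discr: "real (lb_discrepancy n l) = real mx - real mn"
    by (simp add: lb_discrepancy_def mx_def mn_def)
  have "real n * real mn \<le> (\<Sum>i<n. real (l i))" "(\<Sum>i<n. real (l i)) \<le> real n * real mx"
    using sum_bounded_below[of "{..<n}" "real mn" "\<lambda>i. real (l i)"]
      sum_bounded_above[of "{..<n}" "\<lambda>i. real (l i)" "real mx"] bounds by auto
  hence avg: "real mn \<le> lb_avg n l" "lb_avg n l \<le> real mx"
    using assms by (simp_all add: lb_avg_def field_simps)
  have "(real (l i) - lb_avg n l)^2 \<le> real (lb_discrepancy n l)^2" if "i < n" for i
  proof -
    have "\<bar>real (l i) - lb_avg n l\<bar> \<le> real (lb_discrepancy n l)"
      unfolding discr using bounds[OF that] avg by (auto simp: abs_le_iff)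
    thus ?thesis using power_mono[of _ _ 2] by (metis abs_ge_zero power2_abs)
  qed
  hence "lb_potential n l \<le> real (card {..<n}) * real (lb_discrepancy n l)^2"
    unfolding lb_potential_def by (intro sum_bounded_above) auto
  thus ?thesis by simp
qed

lemma balance_sum_squares_le:
  fixes a b :: nat
  shows "real ((a + b + 1) div 2)^2 + real ((a + b) div 2)^2 \<le> real a^2 + real b^2 - ((real a - real b)^2 - 1) / 2"
proof -
  define k where "k = (a + b) div 2"
  have "a + b = 2 * k \<or> a + b = 2 * k + 1" unfolding k_def by presburger
  thus ?thesis
  proof
    assume even: "a + b = 2 * k"
    have ceil: "(a + b + 1) div 2 = k" using even by simp
    have b_eq: "real b = 2 * real k - real a" using arg_cong[OF even, of real] by simp
    show ?thesis unfolding ceil k_def[symmetric] b_eq by (simp add: power2_eq_square field_simps)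
  next
    assume odd: "a + b = 2 * k + 1"
    have ceil: "(a + b + 1) div 2 = k + 1" using odd by simp
    have b_eq: "real b = 2 * real k + 1 - real a" using arg_cong[OF odd, of real] by simp
    show ?thesis unfolding ceil k_def[symmetric] b_eq by (simp add: power2_eq_square field_simps)
  qed
qed

lemma sum_lb_update:
  fixes F :: "nat \<Rightarrow> real"
  assumes "u < n" "v < n" "u \<noteq> v"
  shows "(\<Sum>i<n. F (lb_update l u v i)) = (\<Sum>i<n. F (l i))
           + (F ((l u + l v + 1) div 2) - F (l u)) + (F ((l u + l v) div 2) - F (l v))"
proof -
  have "(\<Sum>i<n. F (lb_update l u v i)) = (\<Sum>i<n. F (l i)
      + ((if i = u then F ((l u + l v + 1) div 2) - F (l u) else 0)
      + (if i = v then F ((l u + l v) div 2) - F (l v) else 0)))"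
    by (intro sum.cong refl) (auto simp: lb_update_def assms)
  thus ?thesis using assms by (simp add: sum.distrib)
qed

lemma lb_potential_update_le:
  assumes "u < n" "v < n" "u \<noteq> v"
  shows "lb_potential n (lb_update l u v) \<le> lb_potential n l - (real (l u) - real (l v))^2 / 2 + 1 / 2"
proof -
  have n: "n > 0" using assms by auto
  have "(l u + l v + 1) div 2 + (l u + l v) div 2 = l u + l v" by presburger
  hence "real ((l u + l v + 1) div 2) + real ((l u + l v) div 2) = real (l u) + real (l v)"
    by (metis of_nat_add)
  hence sum_eq: "(\<Sum>i<n. real (lb_update l u v i)) = (\<Sum>i<n. real (l i))"
    using sum_lb_update[OF assms, of real l] by simp
  show ?thesis
    using sum_lb_update[OF assms, of "\<lambda>x. real x ^ 2" l] balance_sum_squares_le[of "l u" "l v"]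
    unfolding lb_potential_eq[OF n] sum_eq by (simp add: diff_divide_distrib)
qed

lemma finite_lb_pairs: "finite (lb_pairs n)"
  and card_lb_pairs_le: "card (lb_pairs n) \<le> n * n"
proof -
  have sub: "lb_pairs n \<subseteq> {..<n} \<times> {..<n}" by (auto simp: lb_pairs_def)
  show "finite (lb_pairs n)" by (rule finite_subset[OF sub]) auto
  show "card (lb_pairs n) \<le> n * n" using card_mono[OF _ sub] by simp
qed

lemma lb_pairs_nonempty:
  assumes "n \<ge> 2"
  shows "lb_pairs n \<noteq> {}"
proof -
  have "(0, 1) \<in> lb_pairs n" using assms by (auto simp: lb_pairs_def)
  thus ?thesis by blast
qed

lemma sum_lb_pairs_square_differences:
  "(\<Sum>(u, v)\<in>lb_pairs n. (real (l u) - real (l v))^2) = 2 * real n * lb_potential n l"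
proof (cases "n = 0")
  case False
  have "(\<Sum>(u, v)\<in>lb_pairs n. (real (l u) - real (l v))^2)
      = (\<Sum>(u, v)\<in>{..<n} \<times> {..<n}. (real (l u) - real (l v))^2)"
    by (rule sum.mono_neutral_left) (auto simp: lb_pairs_def)
  also have "\<dots> = (\<Sum>u<n. \<Sum>v<n. (real (l u) - real (l v))^2)"
    by (simp add: sum.cartesian_product)
  finally show ?thesis
    using False by (simp add: sum_square_differences lb_potential_eq right_diff_distrib)
qed (simp add: lb_pairs_def)

lemma lb_potential_expected_step:
  assumes n2: "n \<ge> 2" and large: "real n \<le> lb_potential n l"
  shows "(\<Sum>(u, v)\<in>lb_pairs n. lb_potential n (lb_update l u v)) / real (card (lb_pairs n))
          \<le> (1 - 1 / (2 * real n)) * lb_potential n l"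
proof -
  define P where "P = lb_potential n l"
  define c where "c = real (card (lb_pairs n))"
  have c_pos: "c > 0"
    unfolding c_def using lb_pairs_nonempty[OF n2] finite_lb_pairs by (simp add: card_gt_0_iff)
  have c_le: "c \<le> real n * real n"
    unfolding c_def by (metis card_lb_pairs_le of_nat_le_iff of_nat_mult)
  have "(\<Sum>(u, v)\<in>lb_pairs n. lb_potential n (lb_update l u v))
      \<le> (\<Sum>(u, v)\<in>lb_pairs n. P + 1 / 2 - (real (l u) - real (l v))^2 / 2)"
    by (intro sum_mono) (auto simp: lb_pairs_def P_def intro: lb_potential_update_le[THEN order_trans])
  also have "\<dots> = c * (P + 1 / 2) - real n * P"
    using sum_lb_pairs_square_differences
    by (simp add: case_prod_beta sum_subtractf sum_divide_distrib[symmetric] c_def P_def)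
  finally have "(\<Sum>(u, v)\<in>lb_pairs n. lb_potential n (lb_update l u v)) / c
      \<le> (c * (P + 1 / 2) - real n * P) / c"
    using c_pos by (intro divide_right_mono) auto
  also have "\<dots> = P + 1 / 2 - real n * P / c"
    using c_pos by (simp add: diff_divide_distrib)
  also have "\<dots> \<le> P + 1 / 2 - real n * P / (real n * real n)"
  proof -
    have "real n * P / (real n * real n) \<le> real n * P / c"
      using c_pos c_le large n2 by (intro divide_left_mono) (auto simp: P_def)
    thus ?thesis by simp
  qed
  also have "\<dots> \<le> (1 - 1 / (2 * real n)) * P"
    using large n2 by (simp add: P_def field_simps)
  finally show ?thesis by (simp add: c_def P_def)
qed

definition lb_potential_while_large :: "nat \<Rightarrow> (nat \<Rightarrow> nat) list \<Rightarrow> ennreal" where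
  "lb_potential_while_large n xs =
     (if \<forall>s<length xs. real n \<le> lb_potential n (xs ! s) then ennreal (lb_potential n (last xs)) else 0)"

lemma length_lb_traj: "xs \<in> set_pmf (lb_traj n l0 t) \<Longrightarrow> length xs = Suc t"
proof (induction t arbitrary: xs)
  case (Suc t)
  then obtain ys u v where "ys \<in> set_pmf (lb_traj n l0 t)" "xs = ys @ [lb_update (last ys) u v]"
    by (auto simp: set_bind_pmf)
  thus ?case using Suc.IH by simp
qed simp

lemma nn_integral_lb_step_le:
  assumes n2: "n \<ge> 2" and "ys \<noteq> []"
  shows "(\<integral>\<^sup>+(u, v). lb_potential_while_large n (ys @ [lb_update (last ys) u v]) \<partial>pmf_of_set (lb_pairs n))
          \<le> ennreal (1 - 1 / (2 * real n)) * lb_potential_while_large n ys"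
proof (cases "\<forall>s<length ys. real n \<le> lb_potential n (ys ! s)")
  case True
  have large: "real n \<le> lb_potential n (last ys)"
    using True \<open>ys \<noteq> []\<close> by (simp add: last_conv_nth)
  have "(\<integral>\<^sup>+(u, v). lb_potential_while_large n (ys @ [lb_update (last ys) u v]) \<partial>pmf_of_set (lb_pairs n))
      \<le> (\<integral>\<^sup>+(u, v). ennreal (lb_potential n (lb_update (last ys) u v)) \<partial>pmf_of_set (lb_pairs n))"
    by (intro nn_integral_mono) (auto simp: lb_potential_while_large_def)
  also have "\<dots> = ennreal ((\<Sum>(u, v)\<in>lb_pairs n. lb_potential n (lb_update (last ys) u v))
                         / real (card (lb_pairs n)))"
    using finite_lb_pairs lb_pairs_nonempty[OF n2]
    by (simp add: nn_integral_pmf_of_set case_prod_beta sum_ennreal lb_potential_nonneg sum_nonneg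
        divide_ennreal card_gt_0_iff ennreal_of_nat_eq_real_of_nat)
  also have "\<dots> \<le> ennreal ((1 - 1 / (2 * real n)) * lb_potential n (last ys))"
    by (intro ennreal_leI lb_potential_expected_step[OF n2 large])
  also have "\<dots> = ennreal (1 - 1 / (2 * real n)) * lb_potential_while_large n ys"
    using True n2 by (subst ennreal_mult) (auto simp: lb_potential_nonneg lb_potential_while_large_def field_simps)
  finally show ?thesis .
next
  case False
  then obtain s where "s < length ys" "lb_potential n (ys ! s) < real n" by auto
  hence "lb_potential_while_large n (ys @ [lb_update (last ys) u v]) = 0" for u v
    by (auto simp: lb_potential_while_large_def nth_append)
  thus ?thesis by (simp add: case_prod_unfold)
qed

lemma nn_integral_lb_traj_le:
  assumes n2: "n \<ge> 2"
  shows "(\<integral>\<^sup>+xs. lb_potential_while_large n xs \<partial>lb_traj n l0 t)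
         \<le> ennreal ((1 - 1 / (2 * real n))^t * lb_potential n l0)"
proof (induction t)
  case 0
  show ?case by (simp add: lb_potential_while_large_def)
next
  case (Suc t)
  define q where "q = 1 - 1 / (2 * real n)"
  have q_nonneg: "0 \<le> q" using n2 by (simp add: q_def field_simps)
  have "(\<integral>\<^sup>+xs. lb_potential_while_large n xs \<partial>lb_traj n l0 (Suc t))
      = (\<integral>\<^sup>+ys. (\<integral>\<^sup>+(u, v). lb_potential_while_large n (ys @ [lb_update (last ys) u v])
                   \<partial>pmf_of_set (lb_pairs n)) \<partial>lb_traj n l0 t)"
    by (simp add: case_prod_unfold)
  also have "\<dots> \<le> (\<integral>\<^sup>+ys. ennreal q * lb_potential_while_large n ys \<partial>lb_traj n l0 t)"
  proof (intro nn_integral_mono_AE, unfold AE_measure_pmf_iff, intro ballI)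
    fix ys assume "ys \<in> set_pmf (lb_traj n l0 t)"
    hence "ys \<noteq> []" using length_lb_traj by fastforce
    thus "(\<integral>\<^sup>+(u, v). lb_potential_while_large n (ys @ [lb_update (last ys) u v]) \<partial>pmf_of_set (lb_pairs n))
          \<le> ennreal q * lb_potential_while_large n ys"
      unfolding q_def by (rule nn_integral_lb_step_le[OF n2])
  qed
  also have "\<dots> = ennreal q * (\<integral>\<^sup>+ys. lb_potential_while_large n ys \<partial>lb_traj n l0 t)"
    by (rule nn_integral_cmult) simp
  also have "\<dots> \<le> ennreal q * ennreal (q^t * lb_potential n l0)"
    using Suc.IH by (intro mult_left_mono) (simp_all add: q_def)
  also have "\<dots> = ennreal (q^Suc t * lb_potential n l0)"
    using q_nonneg by (simp add: ennreal_mult[symmetric] lb_potential_nonneg mult.assoc)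
  finally show ?case by (simp add: q_def)
qed

lemma prob_lb_potential_stays_large_le:
  assumes n2: "n \<ge> 2"
  shows "real n * measure_pmf.prob (lb_traj n l0 T) {xs. \<forall>t\<le>T. real n \<le> lb_potential n (xs ! t)}
           \<le> (1 - 1 / (2 * real n))^T * lb_potential n l0"
proof -
  define L where "L = {xs. \<forall>t\<le>T. real n \<le> lb_potential n (xs ! t)}"
  have "ennreal (real n) * emeasure (lb_traj n l0 T) L
      = (\<integral>\<^sup>+xs. ennreal (real n) * indicator L xs \<partial>lb_traj n l0 T)"
    by (simp add: nn_integral_cmult_indicator)
  also have "\<dots> \<le> (\<integral>\<^sup>+xs. lb_potential_while_large n xs \<partial>lb_traj n l0 T)"
  proof (intro nn_integral_mono_AE, unfold AE_measure_pmf_iff, intro ballI)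
    fix xs assume "xs \<in> set_pmf (lb_traj n l0 T)"
    hence len: "length xs = Suc T" by (rule length_lb_traj)
    show "ennreal (real n) * indicator L xs \<le> lb_potential_while_large n xs"
    proof (cases "xs \<in> L")
      case True
      hence "\<forall>s<length xs. real n \<le> lb_potential n (xs ! s)"
        using len by (auto simp: L_def less_Suc_eq_le)
      moreover have "last xs = xs ! T" using len by (cases xs rule: rev_cases) auto
      moreover have "real n \<le> lb_potential n (xs ! T)" using True by (simp add: L_def)
      ultimately show ?thesis using True by (simp add: lb_potential_while_large_def ennreal_leI)
    qed simp
  qed
  also have "\<dots> \<le> ennreal ((1 - 1 / (2 * real n))^T * lb_potential n l0)"
    by (rule nn_integral_lb_traj_le[OF n2])
  finally have "ennreal (real n * measure_pmf.prob (lb_traj n l0 T) L)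
      \<le> ennreal ((1 - 1 / (2 * real n))^T * lb_potential n l0)"
    by (simp add: measure_pmf.emeasure_eq_measure ennreal_mult)
  moreover have "0 \<le> (1 - 1 / (2 * real n))^T * lb_potential n l0"
    using n2 by (intro mult_nonneg_nonneg zero_le_power lb_potential_nonneg) (simp add: field_simps)
  ultimately show ?thesis unfolding L_def by (simp add: ennreal_le_iff)
qed

lemma contraction_power_le:
  fixes n d :: real
  assumes "n \<ge> 1" "d \<ge> 1" and T: "real T \<ge> 4 * (n * ln n + n * ln d)"
  shows "(1 - 1 / (2 * n))^T \<le> 1 / (n * d)^2"
proof -
  have "(1 - 1 / (2 * n))^T \<le> exp (- (1 / (2 * n)))^T"
    using assms exp_ge_add_one_self[of "- (1 / (2 * n))"] by (intro power_mono) (simp_all add: field_simps)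
  also have "\<dots> = exp (- (real T / (2 * n)))"
    by (simp add: exp_of_nat_mult[symmetric])
  also have "\<dots> \<le> exp (- ln ((n * d)^2))"
  proof -
    have "ln ((n * d)^2) = 2 * (ln n + ln d)"
      using assms by (simp add: ln_realpow ln_mult)
    also have "\<dots> \<le> real T / (2 * n)"
      using T assms by (simp add: field_simps)
    finally show ?thesis by simp
  qed
  also have "\<dots> = 1 / (n * d)^2"
    using assms by (simp add: exp_minus inverse_eq_divide)
  finally show ?thesis .
qed

theorem lemma2:
  "\<exists>C>0. \<forall>(n::nat) (l0::nat \<Rightarrow> nat) (T::nat).
      n \<ge> 2 \<longrightarrow> lb_discrepancy n l0 \<ge> 1 \<longrightarrow>
      real T \<ge> C * (real n * ln (real n) + real n * ln (real (lb_discrepancy n l0))) \<longrightarrow>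
      measure_pmf.prob (lb_traj n l0 T)
        {xs. \<exists>t\<le>T. lb_potential n (xs ! t) < real n} \<ge> 1 - C / real n"
proof (intro exI[of _ 4] conjI allI impI)
  fix n :: nat and l0 :: "nat \<Rightarrow> nat" and T :: nat
  assume n2: "n \<ge> 2" and "lb_discrepancy n l0 \<ge> 1"
    and T: "real T \<ge> 4 * (real n * ln (real n) + real n * ln (real (lb_discrepancy n l0)))"
  define d where "d = real (lb_discrepancy n l0)"
  define L where "L = {xs. \<forall>t\<le>T. real n \<le> lb_potential n (xs ! t)}"
  have d: "d \<ge> 1" using \<open>lb_discrepancy n l0 \<ge> 1\<close> by (simp add: d_def)
  have "real n * measure_pmf.prob (lb_traj n l0 T) L \<le> (1 - 1 / (2 * real n))^T * lb_potential n l0"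
    unfolding L_def by (rule prob_lb_potential_stays_large_le[OF n2])
  also have "\<dots> \<le> 1 / (real n * d)^2 * (real n * d^2)"
    using contraction_power_le[of "real n" d T] lb_potential_le_discrepancy[of n l0] T n2 d
    by (intro mult_mono) (auto simp: d_def lb_potential_nonneg)
  also have "\<dots> \<le> 4"
    using n2 d by (simp add: field_simps power2_eq_square)
  finally have "measure_pmf.prob (lb_traj n l0 T) L \<le> 4 / real n"
    using n2 by (simp add: field_simps)
  moreover have "{xs. \<exists>t\<le>T. lb_potential n (xs ! t) < real n} = space (lb_traj n l0 T) - L"
    by (auto simp: L_def not_le)
  ultimately show "measure_pmf.prob (lb_traj n l0 T) {xs. \<exists>t\<le>T. lb_potential n (xs ! t) < real n}
      \<ge> 1 - 4 / real n"
    using measure_pmf.prob_compl[of L "lb_traj n l0 T"] by simp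
qed simp

end
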